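(* Let $n,m\ge1$, $p_{n,m}$ stable of degree $n$ in $z$ and $m$ in $w$, and let $a_0,\dots,a_{m-1}$ be as in the context. In $L^2\!\left(\frac{d\sigma}{|p_{n,m}|^2}\right)$, for all $j_1,j_2\in\mathbb{Z}$ and $0\le k_1,k_2\le m-1$, $$\langle z^{j_1+n}w^{k_1},\,z^{j_2}a_{k_2}\rangle=0\quad\text{unless } j_1=j_2 \text{ and } k_1=k_2,$$ and $\langle z^{j+n}w^{k},z^ja_k\rangle\neq0$. Consequently, if $f$ lies in $S=\overline{\operatorname{span}}\{z^jw^k:j\in\mathbb{Z},0\le k<m\}$ and $f\perp z^ja_k$, then the Fourier coefficient $\hat f(j+n,k)=0$.
   Context: $\sigma$ is normalized Lebesgue measure on $\mathbb{T}^2$; $p_{n,m}$ is stable if it has no zeros in $\{|z|\le1,|w|\le1\}$. Inner product $\langle f,g\rangle=\int_{\mathbb{T}^2}f\bar g\,\frac{d\sigma}{|p_{n,m}|^2}$; closures are taken in this space (which equals $L^2(\sigma)$ as a set). $\tilde p_{n,m}(z,w)=z^nw^m\overline{p_{n,m}(1/\bar z,1/\bar w)}$; $L(z,w;\eta)=z^n\frac{p_{n,m}(z,w)\overline{p_{n,m}(1/\bar z,\eta)}-\tilde p_{n,m}(z,w)\overline{\tilde p_{n,m}(1/\bar z,\eta)}}{1-w\bar\eta}$, a polynomial in $z,w,\bar\eta$, and $a_j$ are defined by $L=\sum_{j=0}^{m-1}a_j(z,w)\bar\eta^j$. $\hat f(i,j)$ denotes the $(i,j)$ Fourier coefficient of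 $f$ on $\mathbb{T}^2$. *)

theory Defs
  imports "HOL-Analysis.Analysis"
begin

definition poly2 :: "(nat \<Rightarrow> nat \<Rightarrow> complex) \<Rightarrow> nat \<Rightarrow> nat \<Rightarrow> complex \<Rightarrow> complex \<Rightarrow> complex" where
  "poly2 c n m z w = (\<Sum>i\<le>n. \<Sum>j\<le>m. c i j * z ^ i * w ^ j)"

definition bidegree :: "(nat \<Rightarrow> nat \<Rightarrow> complex) \<Rightarrow> nat \<Rightarrow> nat \<Rightarrow> bool" where
  "bidegree c n m \<longleftrightarrow> (\<exists>j\<le>m. c n j \<noteq> 0) \<and> (\<exists>i\<le>n. c i m \<noteq> 0)"

definition stable2 :: "(nat \<Rightarrow> nat \<Rightarrow> complex) \<Rightarrow> nat \<Rightarrow> nat \<Rightarrow> bool" where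
  "stable2 c n m \<longleftrightarrow> (\<forall>z w. cmod z \<le> 1 \<longrightarrow> cmod w \<le> 1 \<longrightarrow> poly2 c n m z w \<noteq> 0)"

text \<open>Reflected polynomial z^n w^m conj(p(1/conj z, 1/conj w)), written as the
  polynomial it is (reflected, conjugated coefficients).\<close>
definition refl2 :: "(nat \<Rightarrow> nat \<Rightarrow> complex) \<Rightarrow> nat \<Rightarrow> nat \<Rightarrow> complex \<Rightarrow> complex \<Rightarrow> complex" where
  "refl2 c n m z w = (\<Sum>i\<le>n. \<Sum>j\<le>m. cnj (c i j) * z ^ (n - i) * w ^ (m - j))"

definition tor :: "(complex \<Rightarrow> complex \<Rightarrow> complex) \<Rightarrow> real \<times> real \<Rightarrow> complex" where
  "tor f x = f (cis (fst x)) (cis (snd x))"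

definition T2 :: "(real \<times> real) set" where
  "T2 = {0..2*pi} \<times> {0..2*pi}"

text \<open>Inner product of L^2(d\<sigma>/|p|^2), \<sigma> normalised Lebesgue measure on T^2.\<close>
definition ipw :: "(complex \<Rightarrow> complex \<Rightarrow> complex) \<Rightarrow> (complex \<Rightarrow> complex \<Rightarrow> complex)
    \<Rightarrow> (complex \<Rightarrow> complex \<Rightarrow> complex) \<Rightarrow> complex" where
  "ipw p f g = complex_of_real (1 / (4 * pi ^ 2)) *
     (LINT x:T2|lborel. tor f x * cnj (tor g x) / complex_of_real ((cmod (tor p x))\<^sup>2))"

definition normw2 :: "(complex \<Rightarrow> complex \<Rightarrow> complex) \<Rightarrow> (complex \<Rightarrow> complex \<Rightarrow> complex) \<Rightarrow> real" where
  "normw2 p f = (1 / (4 * pi ^ 2)) *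
     (LINT x:T2|lborel. (cmod (tor f x))\<^sup>2 / (cmod (tor p x))\<^sup>2)"

text \<open>Membership in L^2(\<sigma>) (= L^2(d\<sigma>/|p|^2) as a set).\<close>
definition L2T :: "(complex \<Rightarrow> complex \<Rightarrow> complex) \<Rightarrow> bool" where
  "L2T f \<longleftrightarrow> tor f \<in> borel_measurable lborel \<and>
     set_integrable lborel T2 (\<lambda>x. (cmod (tor f x))\<^sup>2)"

definition trig :: "(int \<times> nat) set \<Rightarrow> (int \<times> nat \<Rightarrow> complex) \<Rightarrow> complex \<Rightarrow> complex \<Rightarrow> complex" where
  "trig F d z w = (\<Sum>jk\<in>F. d jk * z powi (fst jk) * w ^ (snd jk))"

text \<open>S = closed span of {z^j w^k : j \<in> \<int>, 0 \<le> k < m} in L^2(d\<sigma>/|p|^2).\<close>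
definition inS :: "(complex \<Rightarrow> complex \<Rightarrow> complex) \<Rightarrow> nat \<Rightarrow> (complex \<Rightarrow> complex \<Rightarrow> complex) \<Rightarrow> bool" where
  "inS p m f \<longleftrightarrow> L2T f \<and>
     (\<forall>e>0. \<exists>F d. finite F \<and> F \<subseteq> UNIV \<times> {..<m} \<and>
        normw2 p (\<lambda>z w. f z w - trig F d z w) < e)"

definition fourier2 :: "(complex \<Rightarrow> complex \<Rightarrow> complex) \<Rightarrow> int \<Rightarrow> int \<Rightarrow> complex" where
  "fourier2 f i j = complex_of_real (1 / (4 * pi ^ 2)) *
     (LINT x:T2|lborel. tor f x * cis (- (of_int i * fst x)) * cis (- (of_int j * snd x)))"

end

theory Submission
  imports Defs "HOL-Complex_Analysis.Cauchy_Integral_Theorem"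
begin

text \<open>
  We show that the Gram matrix of the families z^{j+n} w^k and z^j a_k in L^2(d\<sigma>/|p|^2) is
  the identity, and deduce the statement on Fourier coefficients by continuity.

  1. One-variable facts on the unit circle: orthogonality of characters, and the Cauchy
     theorem in the form: for a polynomial q without zeros in the closed disc,
     \<integral> e^{irt}/q(e^{it}) dt = 0 for r \<ge> 1; hence \<Sum>_l q_l \<integral> e^{i(l-N)t}/q(e^{it}) dt = 2\<pi>[N=0].
  2. For fixed z on the unit circle, p(z,\<cdot>) is a polynomial q in w; comparing coefficients
     of conj \<eta> in the identity defining L gives a_k = z^n \<Sum>_{l\<le>k} w^{k-l} E_l with
     E_l = q(w) conj(q_l) - q~(w) q_{m-l}, where q~ is the reflection of q.
  3. Inserting this into <z^{j1+n} w^{k1}, z^{j2} a_{k2}> and integrating first in w with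
     the facts of step 1, then in z, yields the Kronecker delta (parts one and two).
  4. The functional f \<mapsto> <f, z^j a_k> - \<hat>f(j+n,k) is integration against a continuous
     kernel, hence bounded on L^2(d\<sigma>/|p|^2); by step 3 it vanishes on the monomials
     z^i w^k' with k' < m, so it vanishes on their closed span S (part three).
\<close>

section \<open>Integrals over the unit circle\<close>

lemma integral_cis_int:
  fixes r :: int
  shows "integral {0..2*pi} (\<lambda>t. cis (of_int r * t)) = (if r = 0 then 2*pi else 0)"
proof (cases "r = 0")
  case True
  then show ?thesis by (simp add: scaleR_conv_of_real)
next
  case False
  have deriv: "((\<lambda>t. cis (of_int r * t) / (\<i> * of_int r)) has_vector_derivative cis (of_int r * t))
      (at t within {0..2*pi})" for t
  proof -
    have "((\<lambda>t. cis (of_int r * t)) has_vector_derivative \<i> * of_int r * cis (of_int r * t)) (at t within {0..2*pi})"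
      unfolding has_vector_derivative_def
      by (rule derivative_eq_intros refl | simp)+ (auto simp: fun_eq_iff scaleR_conv_of_real algebra_simps)
    from has_vector_derivative_divide[OF this, of "\<i> * of_int r"] show ?thesis
      using False by simp
  qed
  have "((\<lambda>t. cis (of_int r * t)) has_integral
        (cis (of_int r * (2*pi)) / (\<i> * of_int r) - cis (of_int r * 0) / (\<i> * of_int r))) {0..2*pi}"
    by (rule fundamental_theorem_of_calculus) (use deriv in auto)
  moreover have "cis (of_int r * (2*pi)) = 1"
    by (metis cis_power_int cis_2pi power_int_1_left)
  ultimately show ?thesis using False by (simp add: integral_unique)
qed

lemma circle_integral_holomorphic:
  fixes f :: "complex \<Rightarrow> complex"
  assumes "continuous_on (cball 0 1) f" and "f holomorphic_on ball 0 1"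
  shows "((\<lambda>t. f (cis t) * cis t) has_integral 0) {0..2*pi}"
proof -
  have "(f has_contour_integral 0) (part_circlepath 0 1 0 (2*pi))"
  proof (rule Cauchy_theorem_disc[where K = "{}"])
    show "path_image (part_circlepath 0 1 0 (2*pi)) \<subseteq> cball 0 1"
      using path_image_part_circlepath_subset[of 0 "2*pi" 1 0] by auto
    show "pathfinish (part_circlepath 0 1 0 (2*pi)) = pathstart (part_circlepath 0 1 0 (2*pi))"
      by (simp add: exp_Euler)
  qed (use assms in \<open>auto intro: holomorphic_on_imp_differentiable_at\<close>)
  then have "((\<lambda>t. f (cis t) * \<i> * cis t) has_integral 0) {0..2*pi}"
    by (simp add: has_contour_integral_part_circlepath_iff)
  then have "((\<lambda>t. (- \<i>) * (f (cis t) * \<i> * cis t)) has_integral (- \<i>) * 0) {0..2*pi}"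
    by (rule has_integral_mult_right)
  then show ?thesis by (simp add: mult_ac)
qed

definition polyC :: "(nat \<Rightarrow> complex) \<Rightarrow> nat \<Rightarrow> complex \<Rightarrow> complex" where
  "polyC C m w = (\<Sum>j\<le>m. C j * w ^ j)"

lemma continuous_on_polyC_cis [continuous_intros]:
  "continuous_on S g \<Longrightarrow> continuous_on S (\<lambda>x. polyC C m (cis (g x)))"
  unfolding polyC_def by (intro continuous_intros)

lemma integrable_cis_div_polyC:
  assumes "\<And>t. polyC C m (cis t) \<noteq> 0"
  shows "(\<lambda>t. cis (of_int r * t) / polyC C m (cis t)) integrable_on {0..2*pi}"
  by (intro integrable_continuous_interval continuous_intros) (use assms in auto)

text \<open>If q has no zeros in the closed disc, e^{irt}/q(e^{it}) has mean zero for r \<ge> 1: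
  it is w^{r-1}/q(w) \<cdot> w on the circle, with w^{r-1}/q(w) holomorphic in the disc.\<close>

lemma integral_cis_div_polyC:
  assumes nz: "\<And>w. cmod w \<le> 1 \<Longrightarrow> polyC C m w \<noteq> 0" and r: "r \<ge> 1"
  shows "integral {0..2*pi} (\<lambda>t. cis (of_int r * t) / polyC C m (cis t)) = 0"
proof -
  define f where "f w = w ^ (nat r - 1) / polyC C m w" for w
  have "continuous_on (cball 0 1) f"
    unfolding f_def polyC_def by (intro continuous_intros) (use nz in \<open>auto simp: polyC_def\<close>)
  moreover have "f holomorphic_on ball 0 1"
    unfolding f_def polyC_def by (intro holomorphic_intros) (use nz in \<open>auto simp: polyC_def\<close>)
  moreover have "f (cis t) * cis t = cis (of_int r * t) / polyC C m (cis t)" for t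
  proof -
    have "nat r = Suc (nat r - 1)" using r by simp
    then have "cis t ^ (nat r - 1) * cis t = cis t ^ nat r"
      by (metis power_Suc2)
    moreover have "cis t ^ nat r = cis (of_int r * t)" using Complex.DeMoivre[of t "nat r"] r by simp
    ultimately show ?thesis by (simp add: f_def)
  qed
  ultimately show ?thesis
    using circle_integral_holomorphic[of f] by (simp add: integral_unique)
qed

text \<open>Summing against the coefficients of q reproduces q(e^{it}) in the numerator, so only
  the character e^{-iNt} survives.\<close>

lemma integral_polyC_reproducing:
  assumes nz: "\<And>w. cmod w \<le> 1 \<Longrightarrow> polyC C m w \<noteq> 0"
  shows "(\<Sum>l\<le>m. C l * integral {0..2*pi} (\<lambda>t. cis (of_int (int l - N) * t) / polyC C m (cis t)))
     = (if N = 0 then 2*pi else 0)"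
proof -
  have nz_circle: "polyC C m (cis t) \<noteq> 0" for t using nz by simp
  define g where "g l t = cis (of_int (int l - N) * t) / polyC C m (cis t)" for l t
  have g_int: "g l integrable_on {0..2*pi}" for l
    unfolding g_def by (rule integrable_cis_div_polyC[OF nz_circle])
  have "(\<Sum>l\<le>m. C l * integral {0..2*pi} (g l)) = integral {0..2*pi} (\<lambda>t. \<Sum>l\<le>m. C l * g l t)"
    by (subst integral_sum) (auto intro: integrable_on_mult_right g_int)
  also have "\<dots> = integral {0..2*pi} (\<lambda>t. cis (of_int (- N) * t))"
  proof (rule integral_cong)
    fix t
    have "(\<Sum>l\<le>m. C l * g l t) = cis (of_int (- N) * t) * polyC C m (cis t) / polyC C m (cis t)"
      by (simp add: g_def polyC_def sum_distrib_left sum_divide_distrib Complex.DeMoivre cis_mult algebra_simps)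
    then show "(\<Sum>l\<le>m. C l * g l t) = cis (of_int (- N) * t)"
      using nz_circle[of t] by simp
  qed
  also have "\<dots> = (if N = 0 then 2*pi else 0)" by (subst integral_cis_int) simp
  finally show ?thesis unfolding g_def by (simp only: if_distrib of_real_0)
qed

section \<open>The coefficients a_k on the circle |z| = 1\<close>

definition zcoeff :: "(nat \<Rightarrow> nat \<Rightarrow> complex) \<Rightarrow> nat \<Rightarrow> complex \<Rightarrow> nat \<Rightarrow> complex" where
  "zcoeff c n z j = (\<Sum>i\<le>n. c i j * z ^ i)"

text \<open>The reflection w^m conj(q(1/conj w)) of a polynomial q of degree at most m.\<close>

definition reflC :: "(nat \<Rightarrow> complex) \<Rightarrow> nat \<Rightarrow> complex \<Rightarrow> complex" where
  "reflC C m w = (\<Sum>j\<le>m. cnj (C j) * w ^ (m - j))"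

lemma continuous_on_zcoeff_cis [continuous_intros]:
  "continuous_on S g \<Longrightarrow> continuous_on S (\<lambda>x. zcoeff c n (cis (g x)) l)"
  unfolding zcoeff_def by (intro continuous_intros)

lemma continuous_on_polyC_zcoeff [continuous_intros]:
  "continuous_on S f \<Longrightarrow> continuous_on S g \<Longrightarrow>
     continuous_on S (\<lambda>x. polyC (zcoeff c n (cis (f x))) m (cis (g x)))"
  unfolding polyC_def by (intro continuous_intros)

lemma continuous_on_reflC_zcoeff [continuous_intros]:
  "continuous_on S f \<Longrightarrow> continuous_on S g \<Longrightarrow>
     continuous_on S (\<lambda>x. reflC (zcoeff c n (cis (f x))) m (cis (g x)))"
  unfolding reflC_def by (intro continuous_intros)

lemma poly2_zcoeff: "poly2 c n m z w = polyC (zcoeff c n z) m w"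
  unfolding poly2_def polyC_def zcoeff_def
  by (subst sum.swap) (simp add: sum_distrib_right sum_distrib_left mult_ac)

lemma unimodular_cnj_mult: "cmod z = 1 \<Longrightarrow> cnj z * z = 1"
  by (metis complex_norm_square mult.commute of_real_1 power_one)

lemma unimodular_cnj_pow_diff:
  assumes "cmod z = 1" and "i \<le> n"
  shows "cnj z ^ (n - i) = cnj z ^ n * z ^ i"
proof -
  have "cnj z ^ n * z ^ i = cnj z ^ (n - i) * (cnj z * z) ^ i"
    using assms(2) by (simp add: power_add[symmetric] power_mult_distrib mult_ac)
  then show ?thesis using unimodular_cnj_mult[OF assms(1)] by simp
qed

lemma refl2_zcoeff:
  assumes "cmod z = 1"
  shows "refl2 c n m z w = z ^ n * reflC (zcoeff c n z) m w"
proof -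
  have "z ^ (n - i) = z ^ n * cnj z ^ i" if "i \<le> n" for i
    using unimodular_cnj_pow_diff[of "cnj z" i n] assms that by simp
  then show ?thesis
    unfolding refl2_def reflC_def zcoeff_def
    by (subst sum.swap) (simp add: sum_distrib_left sum_distrib_right mult_ac)
qed

text \<open>On |w| = 1 the reflected polynomial has the same modulus as q.\<close>

lemma cnj_reflC_unimodular:
  assumes "cmod w = 1"
  shows "cnj (reflC C m w) = cnj w ^ m * polyC C m w"
  unfolding reflC_def polyC_def
  by (simp add: unimodular_cnj_pow_diff[OF assms] sum_distrib_left mult_ac)

lemma one_minus_times_sum:
  fixes w x :: complex and d :: "nat \<Rightarrow> complex"
  shows "(1 - w * x) * (\<Sum>k<m. d k * x ^ k) =
     (\<Sum>l\<le>m. ((if l < m then d l else 0) - w * (if l = 0 then 0 else d (l - 1))) * x ^ l)"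
proof (induction m)
  case 0
  then show ?case by simp
next
  case (Suc m)
  let ?c = "\<lambda>M l. ((if l < M then d l else 0) - w * (if l = 0 then 0 else d (l - 1))) * x ^ l"
  have "(\<Sum>l\<le>m. ?c (Suc m) l) = (\<Sum>l\<le>m. ?c m l + (if l = m then d m * x ^ m else 0))"
    by (rule sum.cong) (auto simp: algebra_simps)
  then have shift: "(\<Sum>l\<le>m. ?c (Suc m) l) = (\<Sum>l\<le>m. ?c m l) + d m * x ^ m"
    by (simp add: sum.distrib)
  have "(1 - w * x) * (\<Sum>k<Suc m. d k * x ^ k) = (1 - w * x) * (\<Sum>k<m. d k * x ^ k) + (1 - w * x) * d m * x ^ m"
    by (simp add: algebra_simps)
  also have "\<dots> = (\<Sum>l\<le>Suc m. ?c (Suc m) l)"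
    using Suc.IH shift by (simp add: algebra_simps)
  finally show ?case .
qed

text \<open>E_l = q(w) conj(C_l) - q~(w) C_{m-l}, the coefficient of x^l in the numerator of L.\<close>

definition kernel_term :: "(nat \<Rightarrow> nat \<Rightarrow> complex) \<Rightarrow> nat \<Rightarrow> nat \<Rightarrow> complex \<Rightarrow> complex \<Rightarrow> nat \<Rightarrow> complex" where
  "kernel_term c n m z w l =
     polyC (zcoeff c n z) m w * cnj (zcoeff c n z l) - reflC (zcoeff c n z) m w * zcoeff c n z (m - l)"

lemma continuous_on_kernel_term [continuous_intros]:
  "continuous_on S f \<Longrightarrow> continuous_on S g \<Longrightarrow>
     continuous_on S (\<lambda>x. kernel_term c n m (cis (f x)) (cis (g x)) l)"
  unfolding kernel_term_def by (intro continuous_intros)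

locale kernel_coefficients =
  fixes c :: "nat \<Rightarrow> nat \<Rightarrow> complex" and n m :: nat
    and a :: "nat \<Rightarrow> complex \<Rightarrow> complex \<Rightarrow> complex"
  assumes kernel: "\<forall>z w \<eta>. z \<noteq> 0 \<longrightarrow>
        (1 - w * cnj \<eta>) * (\<Sum>j<m. a j z w * cnj \<eta> ^ j) =
        z ^ n * (poly2 c n m z w * cnj (poly2 c n m (1 / cnj z) \<eta>)
                 - refl2 c n m z w * cnj (refl2 c n m (1 / cnj z) \<eta>))"
begin

lemma kernel_unimodular:
  assumes z: "cmod z = 1"
  shows "(1 - w * x) * (\<Sum>k<m. a k z w * x ^ k) = z ^ n * (\<Sum>l\<le>m. kernel_term c n m z w l * x ^ l)"
proof -
  have z0: "z \<noteq> 0" using z by auto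
  have inv: "1 / cnj z = z" using z0 unimodular_cnj_mult[OF z] by (simp add: field_simps)
  have zn: "z ^ n * cnj z ^ n = 1"
    using unimodular_cnj_mult[OF z] by (simp add: power_mult_distrib[symmetric] mult.commute)
  have rev: "(\<Sum>j\<le>m. zcoeff c n z j * x ^ (m - j)) = (\<Sum>l\<le>m. zcoeff c n z (m - l) * x ^ l)"
    using sum.atLeastAtMost_rev[of "\<lambda>j. zcoeff c n z j * x ^ (m - j)" 0 m] by (simp add: atLeast0AtMost)
  have "cnj (poly2 c n m (1 / cnj z) (cnj x)) = (\<Sum>j\<le>m. cnj (zcoeff c n z j) * x ^ j)"
    by (simp add: inv poly2_zcoeff polyC_def)
  moreover have "cnj (refl2 c n m (1 / cnj z) (cnj x)) = cnj z ^ n * (\<Sum>l\<le>m. zcoeff c n z (m - l) * x ^ l)"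
    by (simp add: inv refl2_zcoeff[OF z] reflC_def rev)
  ultimately have "z ^ n * (poly2 c n m z w * cnj (poly2 c n m (1 / cnj z) (cnj x))
                      - refl2 c n m z w * cnj (refl2 c n m (1 / cnj z) (cnj x)))
    = z ^ n * (polyC (zcoeff c n z) m w * (\<Sum>j\<le>m. cnj (zcoeff c n z j) * x ^ j)
               - (z ^ n * cnj z ^ n) * reflC (zcoeff c n z) m w * (\<Sum>l\<le>m. zcoeff c n z (m - l) * x ^ l))"
    by (simp add: poly2_zcoeff refl2_zcoeff[OF z] algebra_simps)
  also have "\<dots> = z ^ n * (\<Sum>l\<le>m. kernel_term c n m z w l * x ^ l)"
    by (simp add: zn kernel_term_def sum_distrib_left sum_subtractf[symmetric] algebra_simps)
  finally show ?thesis using kernel[rule_format, OF z0, of w "cnj x"] by simp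
qed

text \<open>Comparing coefficients of x^k gives a_k - w a_{k-1} = z^n E_k, hence a closed form.\<close>

lemma a_unimodular:
  assumes z: "cmod z = 1" and k: "k < m"
  shows "a k z w = z ^ n * (\<Sum>l\<le>k. w ^ (k - l) * kernel_term c n m z w l)"
proof -
  define E where "E = kernel_term c n m z w"
  define d where "d l = (if l < m then a l z w else 0) - w * (if l = 0 then 0 else a (l - 1) z w)" for l
  have "(\<Sum>l\<le>m. (d l - z ^ n * E l) * x ^ l) = 0" for x
  proof -
    have "(\<Sum>l\<le>m. d l * x ^ l) = z ^ n * (\<Sum>l\<le>m. E l * x ^ l)"
      using kernel_unimodular[OF z, of w x] one_minus_times_sum[of w x "\<lambda>k. a k z w" m]
      by (simp add: d_def E_def)
    then show ?thesis by (simp add: algebra_simps sum_subtractf sum_distrib_left)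
  qed
  then have d: "d l = z ^ n * E l" if "l \<le> m" for l
    using that polyfun_eq_0[of "\<lambda>l. d l - z ^ n * E l" m] by auto
  show ?thesis using k
  proof (induction k)
    case 0
    then show ?case using d[of 0] by (simp add: d_def E_def)
  next
    case (Suc k)
    then have "a (Suc k) z w = w * a k z w + z ^ n * E (Suc k)"
      using d[of "Suc k"] by (simp add: d_def diff_eq_eq add.commute)
    also have "\<dots> = z ^ n * (\<Sum>l\<le>Suc k. w ^ (Suc k - l) * E l)"
      using Suc by (simp add: E_def sum_distrib_left algebra_simps Suc_diff_le)
    finally show ?case by (simp add: E_def)
  qed
qed

end

section \<open>Integration over the torus\<close>

lemma T2_cbox: "T2 = cbox (0, 0) (2*pi, 2*pi)"
  unfolding T2_def cbox_Pair_eq by (simp only: cbox_interval)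

lemma set_integrable_T2:
  fixes G :: "real \<times> real \<Rightarrow> 'b::{banach, second_countable_topology}"
  assumes "continuous_on T2 G"
  shows "set_integrable lborel T2 G"
  unfolding set_integrable_def
  by (rule borel_integrable_compact) (use assms in \<open>auto simp: T2_cbox\<close>)

lemma set_lebesgue_integral_T2:
  fixes G :: "real \<times> real \<Rightarrow> complex"
  assumes "continuous_on T2 G"
  shows "(LINT x:T2|lborel. G x) = integral T2 G"
  by (rule set_borel_integral_eq_integral(2)[OF set_integrable_T2[OF assms]])

lemma set_lebesgue_integral_T2_iterated:
  fixes G :: "real \<times> real \<Rightarrow> complex"
  assumes "continuous_on T2 G"
  shows "(LINT x:T2|lborel. G x) = integral {0..2*pi} (\<lambda>s. integral {0..2*pi} (\<lambda>t. G (s, t)))"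
proof -
  have "integral T2 G = integral (cbox 0 (2*pi)) (\<lambda>s. integral (cbox 0 (2*pi)) (\<lambda>t. G (s, t)))"
    unfolding T2_cbox by (rule integral_prod_continuous) (use assms in \<open>simp add: T2_cbox\<close>)
  then show ?thesis by (simp add: set_lebesgue_integral_T2[OF assms] cbox_interval)
qed

lemma tor_monomial: "tor (\<lambda>z w. z powi j * w ^ k) x = cis (of_int j * fst x) * cis (of_nat k * snd x)"
  by (simp add: tor_def cis_power_int Complex.DeMoivre)

lemma continuous_on_tor_monomial [continuous_intros]:
  "continuous_on S (tor (\<lambda>z w. z powi j * w ^ k))"
  unfolding tor_monomial[abs_def] by (intro continuous_intros)

lemma fourier_orthogonality:
  "(LINT x:T2|lborel. tor (\<lambda>z w. z powi j * w ^ k) x * cnj (tor (\<lambda>z w. z powi j' * w ^ k') x))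
     = (if j = j' \<and> k = k' then 4 * pi^2 else 0)"
proof -
  define G where "G x = tor (\<lambda>z w. z powi j * w ^ k) x * cnj (tor (\<lambda>z w. z powi j' * w ^ k') x)" for x
  have "continuous_on T2 G" unfolding G_def by (intro continuous_intros)
  moreover have "G (s, t) = cis (of_int (j - j') * s) * cis (of_int (int k - int k') * t)" for s t
    by (simp add: G_def tor_monomial cis_cnj cis_mult algebra_simps)
  ultimately have "(LINT x:T2|lborel. G x)
      = integral {0..2*pi} (\<lambda>s. cis (of_int (j - j') * s) * integral {0..2*pi} (\<lambda>t. cis (of_int (int k - int k') * t)))"
    by (simp add: set_lebesgue_integral_T2_iterated)
  also have "\<dots> = (if j - j' = 0 then 2*pi else 0) * (if int k - int k' = 0 then 2*pi else 0)"
    by (simp only: integral_mult_left integral_cis_int of_real_mult)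
  finally show ?thesis by (simp add: G_def power2_eq_square)
qed

section \<open>The Gram matrix of z^{j+n} w^k against z^j a_k\<close>

text \<open>Pointwise on the torus, one summand of w^{k1} conj(w^{k2-l} E_l) / |q(w)|^2 splits into an
  analytic part e^{i(k1+l-k2)t}/q and the conjugate of an analytic part e^{i(m+k2-k1-l)t}/q.\<close>

lemma unimodular_kernel_quotient:
  fixes C :: "nat \<Rightarrow> complex"
  assumes q: "polyC C m (cis t) \<noteq> 0" and l: "l \<le> k2"
  shows "cis t ^ k1 * cnj (cis t ^ (k2 - l))
          * cnj (polyC C m (cis t) * cnj (C l) - reflC C m (cis t) * C (m - l))
          / (polyC C m (cis t) * cnj (polyC C m (cis t)))
   = C l * cis (of_int (int k1 + int l - int k2) * t) / polyC C m (cis t)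
     - cnj (C (m - l)) * cnj (cis (of_int (int m + int k2 - int k1 - int l) * t) / polyC C m (cis t))"
proof -
  define q where "q = polyC C m (cis t)"
  define w where "w = cis t"
  have qc: "cnj q \<noteq> 0" using q by (simp add: q_def)
  have Qc: "cnj (reflC C m w) = cnj w ^ m * q"
    unfolding q_def w_def by (rule cnj_reflC_unimodular) simp
  have A: "w ^ k1 * cnj w ^ (k2 - l) = cis (of_int (int k1 + int l - int k2) * t)"
    unfolding w_def using l by (simp add: Complex.DeMoivre cis_cnj cis_mult of_nat_diff algebra_simps)
  have B: "w ^ k1 * cnj w ^ (k2 - l) * cnj w ^ m = cnj (cis (of_int (int m + int k2 - int k1 - int l) * t))"
    unfolding w_def using l by (simp add: Complex.DeMoivre cis_cnj cis_mult of_nat_diff algebra_simps)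
  have "w ^ k1 * cnj (w ^ (k2 - l)) * cnj (q * cnj (C l) - reflC C m w * C (m - l)) / (q * cnj q)
      = (w ^ k1 * cnj w ^ (k2 - l)) * C l / q
        - (w ^ k1 * cnj w ^ (k2 - l) * cnj w ^ m) * cnj (C (m - l)) / cnj q"
    using q qc by (simp add: Qc q_def field_simps)
  also have "\<dots> = C l * cis (of_int (int k1 + int l - int k2) * t) / q
     - cnj (C (m - l)) * cnj (cis (of_int (int m + int k2 - int k1 - int l) * t) / q)"
    unfolding B unfolding A by (simp add: mult.commute)
  finally show ?thesis by (simp add: q_def w_def)
qed

text \<open>The density of <z^{j1+n} w^{k1}, z^{j2} a_{k2}> after removing the z-character.\<close>

definition gram_density :: "(nat \<Rightarrow> nat \<Rightarrow> complex) \<Rightarrow> nat \<Rightarrow> nat \<Rightarrow> nat \<Rightarrow> nat \<Rightarrow> real \<Rightarrow> real \<Rightarrow> complex" where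
  "gram_density c n m k1 k2 s t = (\<Sum>l\<le>k2.
      zcoeff c n (cis s) l * cis (of_int (int k1 + int l - int k2) * t) / polyC (zcoeff c n (cis s)) m (cis t)
    - cnj (zcoeff c n (cis s) (m - l))
      * cnj (cis (of_int (int m + int k2 - int k1 - int l) * t) / polyC (zcoeff c n (cis s)) m (cis t)))"

lemma stable_polyC_zcoeff: "stable2 c n m \<Longrightarrow> cmod w \<le> 1 \<Longrightarrow> polyC (zcoeff c n (cis s)) m w \<noteq> 0"
  unfolding stable2_def by (metis norm_cis order_refl poly2_zcoeff)

text \<open>Integration in w: only the analytic terms with l \<le> k2 survive, and completing the sum
  to all l \<le> m gives the reproducing identity.\<close>

lemma integral_gram_density:
  assumes stable: "stable2 c n m" and k1: "k1 < m" and k2: "k2 < m"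
  shows "integral {0..2*pi} (gram_density c n m k1 k2 s) = (if k1 = k2 then 2*pi else 0)"
proof -
  define C where "C = zcoeff c n (cis s)"
  have nz: "\<And>w. cmod w \<le> 1 \<Longrightarrow> polyC C m w \<noteq> 0"
    unfolding C_def using stable_polyC_zcoeff[OF stable] by blast
  define g where "g r t = cis (of_int r * t) / polyC C m (cis t)" for r t
  define J where "J r = integral {0..2*pi} (g r)" for r
  have g_int: "g r integrable_on {0..2*pi}" for r
    unfolding g_def by (rule integrable_cis_div_polyC) (simp add: nz)
  have J0: "J r = 0" if "r \<ge> 1" for r
    unfolding J_def g_def by (rule integral_cis_div_polyC[OF nz that])
  have "gram_density c n m k1 k2 s = (\<lambda>t. \<Sum>l\<le>k2. C l * g (int k1 + int l - int k2) t
          - cnj (C (m - l)) * cnj (g (int m + int k2 - int k1 - int l) t))"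
    by (simp add: gram_density_def g_def C_def fun_eq_iff)
  then have "integral {0..2*pi} (gram_density c n m k1 k2 s)
      = (\<Sum>l\<le>k2. C l * J (int k1 + int l - int k2) - cnj (C (m - l)) * cnj (J (int m + int k2 - int k1 - int l)))"
    using g_int
    by (simp add: integral_sum integral_diff integrable_diff integrable_on_mult_right integrable_on_cnj_iff
        integral_cnj J_def)
  also have "\<dots> = (\<Sum>l\<le>k2. C l * J (int l - (int k2 - int k1)))"
    \<comment> \<open>the anti-analytic part integrates to zero, since m + k2 - k1 - l \<ge> 1\<close>
    using k1 by (intro sum.cong refl) (simp add: J0 algebra_simps)
  also have "\<dots> = (\<Sum>l\<le>m. C l * J (int l - (int k2 - int k1)))"
    \<comment> \<open>for k2 < l the exponent l - (k2 - k1) is positive\<close>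
    using k2 by (intro sum.mono_neutral_left) (auto intro!: J0)
  also have "\<dots> = (if int k2 - int k1 = 0 then 2*pi else 0)"
    unfolding J_def g_def by (rule integral_polyC_reproducing[OF nz])
  finally show ?thesis by auto
qed

locale stable_kernel = kernel_coefficients +
  assumes stable: "stable2 c n m"
begin

lemma integrand_monomial_a:
  assumes k2: "k2 < m"
  shows "tor (\<lambda>z w. z powi (j1 + int n) * w ^ k1) x * cnj (tor (\<lambda>z w. z powi j2 * a k2 z w) x)
      / complex_of_real ((cmod (tor (poly2 c n m) x))\<^sup>2)
    = cis (of_int (j1 - j2) * fst x) * gram_density c n m k1 k2 (fst x) (snd x)"
proof -
  obtain s t where x: "x = (s, t)" by (cases x)
  define z where "z = cis s"
  define w where "w = cis t"
  define q where "q = polyC (zcoeff c n z) m w"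
  have q0: "q \<noteq> 0"
    unfolding q_def z_def w_def by (rule stable_polyC_zcoeff[OF stable]) simp
  have a: "a k2 z w = z ^ n * (\<Sum>l\<le>k2. w ^ (k2 - l) * kernel_term c n m z w l)"
    by (rule a_unimodular[OF _ k2]) (simp add: z_def)
  have p: "complex_of_real ((cmod (poly2 c n m z w))\<^sup>2) = q * cnj q"
    unfolding complex_norm_square by (simp add: poly2_zcoeff q_def)
  have zpart: "z powi (j1 + int n) * cnj (z powi j2) * cnj (z ^ n) = cis (of_int (j1 - j2) * s)"
    by (simp add: z_def cis_power_int Complex.DeMoivre cis_cnj cis_mult algebra_simps)
  have "tor (\<lambda>z w. z powi (j1 + int n) * w ^ k1) x * cnj (tor (\<lambda>z w. z powi j2 * a k2 z w) x)
      / complex_of_real ((cmod (tor (poly2 c n m) x))\<^sup>2)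
    = (z powi (j1 + int n) * cnj (z powi j2) * cnj (z ^ n)) *
      (\<Sum>l\<le>k2. w ^ k1 * cnj (w ^ (k2 - l)) * cnj (kernel_term c n m z w l) / (q * cnj q))"
    unfolding x tor_def fst_conv snd_conv z_def[symmetric] w_def[symmetric] a p
    by (simp add: sum_divide_distrib sum_distrib_left algebra_simps)
  also have "(\<Sum>l\<le>k2. w ^ k1 * cnj (w ^ (k2 - l)) * cnj (kernel_term c n m z w l) / (q * cnj q))
      = gram_density c n m k1 k2 s t"
    unfolding gram_density_def
    using unimodular_kernel_quotient[of "zcoeff c n (cis s)" m t _ k2 k1] q0
    by (intro sum.cong refl) (simp add: kernel_term_def q_def z_def w_def)
  finally show ?thesis using zpart x by simp
qed

theorem ipw_monomial_a:
  assumes k1: "k1 < m" and k2: "k2 < m"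
  shows "ipw (poly2 c n m) (\<lambda>z w. z powi (j1 + int n) * w ^ k1) (\<lambda>z w. z powi j2 * a k2 z w)
     = (if j1 = j2 \<and> k1 = k2 then 1 else 0)"
proof -
  define G where "G x = cis (of_int (j1 - j2) * fst x) * gram_density c n m k1 k2 (fst x) (snd x)" for x
  have "continuous_on T2 G"
    unfolding G_def gram_density_def
    by (intro continuous_intros) (auto simp: stable_polyC_zcoeff[OF stable])
  then have "(LINT x:T2|lborel. G x)
      = integral {0..2*pi} (\<lambda>s. cis (of_int (j1 - j2) * s) * integral {0..2*pi} (gram_density c n m k1 k2 s))"
    by (simp add: set_lebesgue_integral_T2_iterated G_def)
  also have "\<dots> = integral {0..2*pi} (\<lambda>s. (if k1 = k2 then 2*pi else 0) * cis (of_int (j1 - j2) * s))"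
    using integral_gram_density[OF stable k1 k2] by (simp add: mult.commute)
  also have "\<dots> = (if k1 = k2 then 2*pi else 0) * (if j1 - j2 = 0 then 2*pi else 0)"
    by (simp only: integral_mult_right integral_cis_int of_real_mult)
  finally have "(LINT x:T2|lborel. G x) = (if j1 = j2 \<and> k1 = k2 then 4 * pi^2 else 0)"
    by (simp add: power2_eq_square)
  then show ?thesis
    unfolding ipw_def integrand_monomial_a[OF k2] G_def[symmetric] by simp
qed

end

section \<open>Bounded functionals on L^2 of the torus\<close>

definition square_integrable :: "(real \<times> real \<Rightarrow> complex) \<Rightarrow> bool" where
  "square_integrable u \<longleftrightarrow>
     u \<in> borel_measurable lborel \<and> set_integrable lborel T2 (\<lambda>x. (cmod (u x))\<^sup>2)"

lemma T2_sets [measurable]: "T2 \<in> sets lborel"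
  unfolding T2_def by (simp add: borel_closed closed_Times)

lemma continuous_imp_borel_measurable_lborel:
  "continuous_on UNIV B \<Longrightarrow> B \<in> borel_measurable lborel"
  using borel_measurable_continuous_onI by (simp add: measurable_lborel1)

lemma bounded_on_T2:
  fixes B :: "real \<times> real \<Rightarrow> 'b::real_normed_vector"
  assumes "continuous_on UNIV B"
  obtains K where "K > 0" "\<And>x. x \<in> T2 \<Longrightarrow> norm (B x) \<le> K"
proof -
  have "compact (B ` T2)"
    by (rule compact_continuous_image) (use assms continuous_on_subset in \<open>auto simp: T2_cbox\<close>)
  then have "bounded (B ` T2)" by (rule compact_imp_bounded)
  then show ?thesis using that by (auto simp: bounded_pos)
qed

lemma square_integrable_continuous:
  assumes "continuous_on UNIV v"
  shows "square_integrable v"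
proof -
  have "set_integrable lborel T2 (\<lambda>x. (cmod (v x))\<^sup>2)"
    by (rule set_integrable_T2, intro continuous_intros continuous_on_subset[OF assms]) simp
  then show ?thesis
    using continuous_imp_borel_measurable_lborel[OF assms] by (simp add: square_integrable_def)
qed

lemma square_integrable_diff:
  assumes u: "square_integrable u" and v: "square_integrable v"
  shows "square_integrable (\<lambda>x. u x - v x)"
proof -
  have "u \<in> borel_measurable lborel" "v \<in> borel_measurable lborel"
    using u v by (simp_all add: square_integrable_def)
  then have meas: "(\<lambda>x. u x - v x) \<in> borel_measurable lborel" by measurable
  have "set_integrable lborel T2 (\<lambda>x. 2 * (cmod (u x))\<^sup>2 + 2 * (cmod (v x))\<^sup>2)"
    using u v by (intro set_integral_add(1) set_integrable_mult_right) (auto simp: square_integrable_def)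
  then have "set_integrable lborel T2 (\<lambda>x. (cmod (u x - v x))\<^sup>2)"
  proof (rule set_integrable_bound)
    show "set_borel_measurable lborel T2 (\<lambda>x. (cmod (u x - v x))\<^sup>2)"
      unfolding set_borel_measurable_def using meas by measurable
    have "(cmod (u x - v x))\<^sup>2 \<le> 2 * (cmod (u x))\<^sup>2 + 2 * (cmod (v x))\<^sup>2" for x
    proof -
      have "(cmod (u x - v x))\<^sup>2 \<le> (cmod (u x) + cmod (v x))\<^sup>2"
        by (rule power_mono[OF norm_triangle_ineq4]) simp
      also have "\<dots> \<le> 2 * (cmod (u x))\<^sup>2 + 2 * (cmod (v x))\<^sup>2"
        using zero_le_power2[of "cmod (u x) - cmod (v x)"] unfolding power2_sum power2_diff by linarith
      finally show ?thesis .
    qed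
    then show "AE x in lborel. x \<in> T2 \<longrightarrow>
        norm ((cmod (u x - v x))\<^sup>2) \<le> norm (2 * (cmod (u x))\<^sup>2 + 2 * (cmod (v x))\<^sup>2)"
      by simp
  qed
  then show ?thesis using meas by (simp add: square_integrable_def)
qed

lemma square_integrable_times_weight:
  fixes R :: "real \<times> real \<Rightarrow> real"
  assumes u: "square_integrable u" and R: "continuous_on UNIV R"
  shows "set_integrable lborel T2 (\<lambda>x. (cmod (u x))\<^sup>2 * R x)"
proof -
  obtain K where K: "K > 0" "\<And>x. x \<in> T2 \<Longrightarrow> norm (R x) \<le> K"
    using bounded_on_T2[OF R] by blast
  have "set_integrable lborel T2 (\<lambda>x. K * (cmod (u x))\<^sup>2)"
    using u by (intro set_integrable_mult_right) (simp add: square_integrable_def)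
  then show ?thesis
  proof (rule set_integrable_bound)
    have "u \<in> borel_measurable lborel" using u by (simp add: square_integrable_def)
    then show "set_borel_measurable lborel T2 (\<lambda>x. (cmod (u x))\<^sup>2 * R x)"
      unfolding set_borel_measurable_def using continuous_imp_borel_measurable_lborel[OF R] by measurable
    show "AE x in lborel. x \<in> T2 \<longrightarrow> norm ((cmod (u x))\<^sup>2 * R x) \<le> norm (K * (cmod (u x))\<^sup>2)"
      using K by (intro AE_I2 impI) (simp add: abs_mult mult.commute mult_right_mono)
  qed
qed

text \<open>a \<le> a^2/(2e) + e/2, from (a - e)^2 \<ge> 0.\<close>

lemma amgm_epsilon: "(a::real) \<ge> 0 \<Longrightarrow> e > 0 \<Longrightarrow> a \<le> a\<^sup>2 / (2 * e) + e / 2"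
proof -
  assume e: "e > 0"
  have "0 \<le> (a - e)\<^sup>2 / (2 * e)" using e by simp
  also have "(a - e)\<^sup>2 / (2 * e) = a\<^sup>2 / (2 * e) + e / 2 - a"
    using e by (simp add: power2_eq_square field_simps)
  finally show ?thesis by simp
qed

text \<open>|h b| \<le> K|h| is bounded by the weighted square |h|^2/P up to an additive error e;
  this replaces the Cauchy-Schwarz inequality.\<close>

lemma pairing_bound_pointwise:
  fixes h b :: complex and P M K e :: real
  assumes "cmod b \<le> K" "0 < P" "P \<le> M" "K > 0" "e > 0"
  shows "cmod (h * b) \<le> K * M / (2 * e) * ((cmod h)\<^sup>2 / P) + e * (K / 2)"
proof -
  have "cmod (h * b) \<le> cmod h * K"
    unfolding norm_mult using assms by (simp add: mult_left_mono)
  also have "\<dots> \<le> ((cmod h)\<^sup>2 / (2 * e) + e / 2) * K"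
    using assms by (intro mult_right_mono amgm_epsilon) auto
  also have "(cmod h)\<^sup>2 / (2 * e) \<le> M / (2 * e) * ((cmod h)\<^sup>2 / P)"
  proof -
    have "(cmod h)\<^sup>2 * 1 \<le> (cmod h)\<^sup>2 * (M / P)"
      using assms by (intro mult_left_mono) auto
    then show ?thesis using assms by (simp add: field_simps)
  qed
  then have "((cmod h)\<^sup>2 / (2 * e) + e / 2) * K \<le> (M / (2 * e) * ((cmod h)\<^sup>2 / P) + e / 2) * K"
    using assms by (intro mult_right_mono) auto
  finally show ?thesis by (simp add: algebra_simps)
qed

lemma square_integrable_mult_continuous:
  assumes u: "square_integrable u" and B: "continuous_on UNIV B"
  shows "set_integrable lborel T2 (\<lambda>x. u x * B x)"
proof -
  obtain K where K: "K > 0" "\<And>x. x \<in> T2 \<Longrightarrow> cmod (B x) \<le> K"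
    using bounded_on_T2[OF B] by blast
  have sq: "set_integrable lborel T2 (\<lambda>x. (cmod (u x))\<^sup>2)" using u by (simp add: square_integrable_def)
  have "set_integrable lborel T2 (\<lambda>x. K / 2 * (cmod (u x))\<^sup>2 + K / 2)"
    by (rule set_integral_add(1)[OF set_integrable_mult_right[OF sq] set_integrable_T2]) simp
  then show ?thesis
  proof (rule set_integrable_bound)
    have "u \<in> borel_measurable lborel" using u by (simp add: square_integrable_def)
    then show "set_borel_measurable lborel T2 (\<lambda>x. u x * B x)"
      unfolding set_borel_measurable_def using continuous_imp_borel_measurable_lborel[OF B] by measurable
    show "AE x in lborel. x \<in> T2 \<longrightarrow> norm (u x * B x) \<le> norm (K / 2 * (cmod (u x))\<^sup>2 + K / 2)"
      using K pairing_bound_pointwise[of "B _" K 1 1 1 "u _"] by (intro AE_I2 impI) simp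
  qed
qed

lemma pairing_bound:
  fixes B :: "real \<times> real \<Rightarrow> complex" and P :: "real \<times> real \<Rightarrow> real"
  assumes B: "continuous_on UNIV B" and P: "continuous_on UNIV P" and P_pos: "\<And>x. P x > 0"
  obtains A C where "A \<ge> 0" and "\<And>h e. square_integrable h \<Longrightarrow> e > 0 \<Longrightarrow>
     norm (LINT x:T2|lborel. h x * B x) \<le> A * (LINT x:T2|lborel. (cmod (h x))\<^sup>2 / P x) / e + C * e"
proof -
  obtain K where K: "K > 0" "\<And>x. x \<in> T2 \<Longrightarrow> cmod (B x) \<le> K"
    using bounded_on_T2[OF B] by blast
  obtain M where M: "M > 0" "\<And>x. x \<in> T2 \<Longrightarrow> norm (P x) \<le> M"
    using bounded_on_T2[OF P] by blast
  have P_le: "P x \<le> M" if "x \<in> T2" for x using M(2)[OF that] by simp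
  define C where "C = (LINT x:T2|lborel. K / 2)"
  have "norm (LINT x:T2|lborel. h x * B x)
      \<le> K * M / 2 * (LINT x:T2|lborel. (cmod (h x))\<^sup>2 / P x) / e + C * e"
    if h: "square_integrable h" and e: "e > 0" for h e
  proof -
    have weighted: "set_integrable lborel T2 (\<lambda>x. (cmod (h x))\<^sup>2 / P x)"
      using square_integrable_times_weight[OF h, of "\<lambda>x. 1 / P x"] P P_pos
      by (simp add: continuous_on_divide less_imp_neq[symmetric])
    have bound_int: "set_integrable lborel T2 (\<lambda>x. K * M / (2 * e) * ((cmod (h x))\<^sup>2 / P x) + e * (K / 2))"
      by (intro set_integral_add(1) set_integrable_mult_right weighted set_integrable_T2) simp
    have prod_int: "set_integrable lborel T2 (\<lambda>x. h x * B x)"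
      by (rule square_integrable_mult_continuous[OF h B])
    have "norm (LINT x:T2|lborel. h x * B x) \<le> (LINT x:T2|lborel. norm (h x * B x))"
      by (rule set_integral_norm_bound[OF prod_int])
    also have "\<dots> \<le> (LINT x:T2|lborel. K * M / (2 * e) * ((cmod (h x))\<^sup>2 / P x) + e * (K / 2))"
      using K P_le P_pos e
      by (intro set_integral_mono[OF set_integrable_norm[OF prod_int] bound_int] pairing_bound_pointwise) auto
    also have "\<dots> = (LINT x:T2|lborel. K * M / (2 * e) * ((cmod (h x))\<^sup>2 / P x))
                     + (LINT x:T2|lborel. e * (K / 2))"
      by (rule set_integral_add(2)[OF set_integrable_mult_right[OF weighted] set_integrable_T2]) simp
    also have "\<dots> = K * M / (2 * e) * (LINT x:T2|lborel. (cmod (h x))\<^sup>2 / P x) + e * C"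
      unfolding C_def by (simp only: set_integral_mult_right)
    finally show ?thesis using e by (simp add: field_simps)
  qed
  moreover have "K * M / 2 \<ge> 0" using K M by simp
  ultimately show ?thesis using that by blast
qed

lemma nonpos_if_le_scaled_epsilon:
  fixes x A :: real
  assumes "\<And>e. e > 0 \<Longrightarrow> x \<le> A * e"
  shows "x \<le> 0"
proof (cases "A > 0")
  case True
  show ?thesis
  proof (rule field_le_epsilon)
    fix e :: real
    assume "e > 0"
    then show "x \<le> 0 + e" using assms[of "e / A"] True by simp
  qed
next
  case False
  then show ?thesis using assms[of 1] by simp
qed

lemma pairing_vanishes_on_closure:
  fixes B :: "real \<times> real \<Rightarrow> complex" and P :: "real \<times> real \<Rightarrow> real"
  assumes B: "continuous_on UNIV B" and P: "continuous_on UNIV P" "\<And>x. P x > 0"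
    and u: "square_integrable u"
    and approx: "\<And>e. e > 0 \<Longrightarrow> \<exists>v. continuous_on UNIV v \<and> (LINT x:T2|lborel. v x * B x) = 0 \<and>
                   (LINT x:T2|lborel. (cmod (u x - v x))\<^sup>2 / P x) < e"
  shows "(LINT x:T2|lborel. u x * B x) = 0"
proof -
  obtain A C where A: "A \<ge> 0" and bound: "\<And>h e. square_integrable h \<Longrightarrow> e > 0 \<Longrightarrow>
      norm (LINT x:T2|lborel. h x * B x) \<le> A * (LINT x:T2|lborel. (cmod (h x))\<^sup>2 / P x) / e + C * e"
    using pairing_bound[OF B P] by blast
  have "norm (LINT x:T2|lborel. u x * B x) \<le> (A + C) * e" if e: "e > 0" for e
  proof -
    obtain v where v: "continuous_on UNIV v" and v0: "(LINT x:T2|lborel. v x * B x) = 0"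
      and close: "(LINT x:T2|lborel. (cmod (u x - v x))\<^sup>2 / P x) < e\<^sup>2"
      using approx[of "e\<^sup>2"] e by auto
    define h where "h x = u x - v x" for x
    have h: "square_integrable h"
      unfolding h_def by (rule square_integrable_diff[OF u square_integrable_continuous[OF v]])
    have "(\<lambda>x. u x * B x) = (\<lambda>x. v x * B x + h x * B x)"
      by (simp add: h_def fun_eq_iff algebra_simps)
    then have "(LINT x:T2|lborel. u x * B x) = (LINT x:T2|lborel. h x * B x)"
      using v0 square_integrable_mult_continuous[OF square_integrable_continuous[OF v] B]
        square_integrable_mult_continuous[OF h B]
      by (simp add: set_integral_add(2))
    also have "norm \<dots> \<le> A * (LINT x:T2|lborel. (cmod (h x))\<^sup>2 / P x) / e + C * e"
      by (rule bound[OF h e])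
    also have "\<dots> \<le> A * e\<^sup>2 / e + C * e"
      using close A e by (intro add_right_mono divide_right_mono mult_left_mono) (auto simp: h_def)
    finally show ?thesis using e by (simp add: power2_eq_square algebra_simps)
  qed
  then have "norm (LINT x:T2|lborel. u x * B x) \<le> 0"
    by (rule nonpos_if_le_scaled_epsilon)
  then show ?thesis by simp
qed

section \<open>Fourier coefficients of functions in S\<close>

lemma fourier2_pairing:
  "fourier2 f i (int k) = complex_of_real (1 / (4 * pi^2)) *
     (LINT x:T2|lborel. tor f x * cnj (tor (\<lambda>z w. z powi i * w ^ k) x))"
  unfolding fourier2_def by (simp add: tor_monomial cis_cnj mult.assoc)

lemma fourier2_monomial:
  "fourier2 (\<lambda>z w. z powi j * w ^ k) i (int k') = (if j = i \<and> k = k' then 1 else 0)"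
  unfolding fourier2_pairing fourier_orthogonality by simp

lemma continuous_on_tor_trig [continuous_intros]: "continuous_on S (tor (trig F d))"
  unfolding tor_def[abs_def] trig_def by (intro continuous_intros) auto

lemma square_integrable_tor_iff: "square_integrable (tor f) \<longleftrightarrow> L2T f"
  by (simp add: square_integrable_def L2T_def)

context stable_kernel
begin

lemma continuous_on_tor_poly2: "continuous_on S (tor (poly2 c n m))"
  unfolding tor_def[abs_def] poly2_def by (intro continuous_intros)

lemma tor_poly2_nonzero: "tor (poly2 c n m) x \<noteq> 0"
  using stable unfolding stable2_def tor_def by simp

lemma continuous_on_tor_a:
  assumes k: "k < m"
  shows "continuous_on S (tor (\<lambda>z w. z powi j * a k z w))"
proof -
  have "tor (\<lambda>z w. z powi j * a k z w) = (\<lambda>x. cis (fst x) powi j * (cis (fst x) ^ n *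
      (\<Sum>l\<le>k. cis (snd x) ^ (k - l) * kernel_term c n m (cis (fst x)) (cis (snd x)) l)))"
    by (simp add: tor_def a_unimodular[OF _ k] fun_eq_iff)
  then show ?thesis by (simp only:) (intro continuous_intros; simp)
qed

text \<open>The difference of the functionals f \<mapsto> <f, z^j a_k> and f \<mapsto> \<hat>f(j+n,k),
  written as a pairing against a continuous kernel on the torus.\<close>

definition defect_kernel :: "int \<Rightarrow> nat \<Rightarrow> real \<times> real \<Rightarrow> complex" where
  "defect_kernel j k x = cnj (tor (\<lambda>z w. z powi j * a k z w) x) / complex_of_real ((cmod (tor (poly2 c n m) x))\<^sup>2)
     - cnj (tor (\<lambda>z w. z powi (j + int n) * w ^ k) x)"

lemma continuous_on_defect_kernel:
  "k < m \<Longrightarrow> continuous_on S (defect_kernel j k)"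
  unfolding defect_kernel_def[abs_def]
  by (intro continuous_intros continuous_on_tor_a continuous_on_tor_poly2) (auto simp: tor_poly2_nonzero)

lemma ipw_minus_fourier2:
  assumes k: "k < m" and f: "square_integrable (tor f)"
  shows "ipw (poly2 c n m) f (\<lambda>z w. z powi j * a k z w) - fourier2 f (j + int n) (int k)
     = complex_of_real (1 / (4 * pi^2)) * (LINT x:T2|lborel. tor f x * defect_kernel j k x)"
proof -
  define B1 where "B1 x = cnj (tor (\<lambda>z w. z powi j * a k z w) x) / complex_of_real ((cmod (tor (poly2 c n m) x))\<^sup>2)" for x
  define B2 where "B2 x = cnj (tor (\<lambda>z w. z powi (j + int n) * w ^ k) x)" for x
  have "continuous_on UNIV B1"
    unfolding B1_def[abs_def]
    by (intro continuous_intros continuous_on_tor_a[OF k] continuous_on_tor_poly2) (simp add: tor_poly2_nonzero)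
  moreover have "continuous_on UNIV B2"
    unfolding B2_def[abs_def] by (intro continuous_intros)
  ultimately have "(LINT x:T2|lborel. tor f x * defect_kernel j k x)
      = (LINT x:T2|lborel. tor f x * B1 x) - (LINT x:T2|lborel. tor f x * B2 x)"
    using f unfolding defect_kernel_def B1_def[symmetric] B2_def[symmetric] right_diff_distrib
    by (intro set_integral_diff(2) square_integrable_mult_continuous)
  moreover have "ipw (poly2 c n m) f (\<lambda>z w. z powi j * a k z w)
      = complex_of_real (1 / (4 * pi^2)) * (LINT x:T2|lborel. tor f x * B1 x)"
    unfolding ipw_def B1_def by (simp add: mult.assoc)
  moreover have "fourier2 f (j + int n) (int k) = complex_of_real (1 / (4 * pi^2)) * (LINT x:T2|lborel. tor f x * B2 x)"
    unfolding fourier2_pairing B2_def ..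
  ultimately show ?thesis by (simp add: right_diff_distrib)
qed

text \<open>By parts one and two and the orthogonality of monomials, the two functionals agree on
  each generator z^i w^k' of S.\<close>

lemma defect_kernel_monomial:
  assumes k: "k < m" and k': "k' < m"
  shows "(LINT x:T2|lborel. tor (\<lambda>z w. z powi j' * w ^ k') x * defect_kernel j k x) = 0"
proof -
  have "ipw (poly2 c n m) (\<lambda>z w. z powi (j' - int n + int n) * w ^ k') (\<lambda>z w. z powi j * a k z w)
      = fourier2 (\<lambda>z w. z powi j' * w ^ k') (j + int n) (int k)"
    using ipw_monomial_a[OF k' k, of "j' - int n" j] fourier2_monomial[of j' k' "j + int n" k] by auto
  then show ?thesis
    using ipw_minus_fourier2[OF k square_integrable_continuous, of "\<lambda>z w. z powi j' * w ^ k'" j]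
    by (simp add: continuous_on_tor_monomial)
qed

lemma defect_kernel_trig:
  assumes k: "k < m" and F: "finite F" "F \<subseteq> UNIV \<times> {..<m}"
  shows "(LINT x:T2|lborel. tor (trig F d) x * defect_kernel j k x) = 0"
proof -
  define M where "M jk x = tor (\<lambda>z w. z powi fst jk * w ^ snd jk) x * defect_kernel j k x" for jk x
  have cont_M: "continuous_on T2 (M jk)" for jk
    unfolding M_def by (intro continuous_intros continuous_on_defect_kernel[OF k])
  have expand: "tor (trig F d) x * defect_kernel j k x = (\<Sum>jk\<in>F. d jk * M jk x)" for x
    by (simp add: tor_def trig_def M_def sum_distrib_right mult.assoc)
  have "(LINT x:T2|lborel. tor (trig F d) x * defect_kernel j k x) = integral T2 (\<lambda>x. \<Sum>jk\<in>F. d jk * M jk x)"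
    unfolding expand by (intro set_lebesgue_integral_T2 continuous_intros cont_M)
  also have "\<dots> = (\<Sum>jk\<in>F. d jk * integral T2 (M jk))"
    using cont_M F(1)
    by (simp add: integral_sum integrable_on_mult_right integrable_continuous T2_cbox)
  also have "\<dots> = 0"
  proof (intro sum.neutral ballI)
    fix jk assume "jk \<in> F"
    then have "snd jk < m" using F(2) by auto
    then have "(LINT x:T2|lborel. M jk x) = 0"
      unfolding M_def by (rule defect_kernel_monomial[OF k])
    then show "d jk * integral T2 (M jk) = 0"
      by (simp add: set_lebesgue_integral_T2[OF cont_M, symmetric])
  qed
  finally show ?thesis .
qed

lemma ipw_a_eq_fourier2:
  assumes k: "k < m" and f: "inS (poly2 c n m) m f"
  shows "ipw (poly2 c n m) f (\<lambda>z w. z powi j * a k z w) = fourier2 f (j + int n) (int k)"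
proof -
  define P where "P x = (cmod (tor (poly2 c n m) x))\<^sup>2" for x
  have u: "square_integrable (tor f)"
    using f by (simp add: inS_def square_integrable_tor_iff)
  have "(LINT x:T2|lborel. tor f x * defect_kernel j k x) = 0"
  proof (rule pairing_vanishes_on_closure[OF continuous_on_defect_kernel[OF k] _ _ u])
    show "continuous_on UNIV P"
      unfolding P_def by (intro continuous_intros continuous_on_tor_poly2)
    show "P x > 0" for x
      by (simp add: P_def tor_poly2_nonzero)
    fix e :: real
    assume e: "e > 0"
    then have "e / (4 * pi^2) > 0" by simp
    then obtain F d where F: "finite F" "F \<subseteq> UNIV \<times> {..<m}"
      and close: "normw2 (poly2 c n m) (\<lambda>z w. f z w - trig F d z w) < e / (4 * pi^2)"
      using f unfolding inS_def by blast
    have "(LINT x:T2|lborel. (cmod (tor f x - tor (trig F d) x))\<^sup>2 / P x)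
        = 4 * pi^2 * normw2 (poly2 c n m) (\<lambda>z w. f z w - trig F d z w)"
      by (simp add: normw2_def P_def tor_def)
    also have "\<dots> < e"
      using close by (simp add: field_simps)
    finally show "\<exists>v. continuous_on UNIV v \<and> (LINT x:T2|lborel. v x * defect_kernel j k x) = 0 \<and>
        (LINT x:T2|lborel. (cmod (tor f x - v x))\<^sup>2 / P x) < e"
      using defect_kernel_trig[OF k F] by (intro exI[of _ "tor (trig F d)"]) (auto intro: continuous_intros)
  qed
  then show ?thesis
    using ipw_minus_fourier2[OF k u, of j] by simp
qed

end

theorem mainTheorem5:
  fixes c :: "nat \<Rightarrow> nat \<Rightarrow> complex" and n m :: nat
    and a :: "nat \<Rightarrow> complex \<Rightarrow> complex \<Rightarrow> complex"
  assumes "n \<ge> 1" and "m \<ge> 1"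
    and "bidegree c n m" and "stable2 c n m"
    and a_def: "\<forall>z w \<eta>. z \<noteq> 0 \<longrightarrow>
        (1 - w * cnj \<eta>) * (\<Sum>j<m. a j z w * cnj \<eta> ^ j) =
        z ^ n * (poly2 c n m z w * cnj (poly2 c n m (1 / cnj z) \<eta>)
                 - refl2 c n m z w * cnj (refl2 c n m (1 / cnj z) \<eta>))"
  defines "p \<equiv> poly2 c n m"
  shows "(\<forall>(j1::int) (j2::int) k1 k2. k1 < m \<longrightarrow> k2 < m \<longrightarrow> (j1 \<noteq> j2 \<or> k1 \<noteq> k2) \<longrightarrow>
            ipw p (\<lambda>z w. z powi (j1 + int n) * w ^ k1) (\<lambda>z w. z powi j2 * a k2 z w) = 0)
       \<and> (\<forall>(j::int) k. k < m \<longrightarrow>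
            ipw p (\<lambda>z w. z powi (j + int n) * w ^ k) (\<lambda>z w. z powi j * a k z w) \<noteq> 0)
       \<and> (\<forall>f (j::int) k. inS p m f \<longrightarrow> k < m \<longrightarrow>
            ipw p f (\<lambda>z w. z powi j * a k z w) = 0 \<longrightarrow>
            fourier2 f (j + int n) (int k) = 0)"
proof -
  interpret stable_kernel c n m a
    by unfold_locales (use assms(4) a_def in auto)
  show ?thesis
    unfolding p_def using ipw_monomial_a ipw_a_eq_fourier2 by auto
qed

end
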